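(* Assume $\sigma_1$ consists of simple eigenvalues. There exist constants $0<C_1<C_2$ and $N\ge N_1$ such that for all $1\le m\le\ell_1$, $|k|\ge N$, and all $x_m^k\in\ker\Delta(\lambda_m^k)$, $y_m^k\in\ker\Delta^*(\overline{\lambda_m^k})$ with $\|x_m^k\|=\|y_m^k\|=1$, $C_1\le\Big|\frac{1}{\lambda_m^k}\langle\Delta'(\lambda_m^k)x_m^k,y_m^k\rangle_{\mathbb C^n}\Big|\le C_2,$ where $\Delta'=\frac{d}{d\lambda}\Delta$.
   Context: $A_{-1}\in\mathbb C^{n\times n}$, $A_2,A_3\in L_2([-1,0];\mathbb C^{n\times n})$, $\Delta(\lambda)=-\lambda I+\lambda e^{-\lambda}A_{-1}+\lambda\int_{-1}^0e^{\lambda s}A_2(s)ds+\int_{-1}^0e^{\lambda s}A_3(s)ds$, $\Delta^*(\lambda)$ the same with $A_{-1},A_2,A_3$ replaced by conjugate transposes. Spectral notation: $\mu_1,\dots,\mu_\ell$ distinct eigenvalues of $A_{-1}$ (possibly $\det A_{-1}=0$), $\sigma_1=\sigma(A_{-1})\cap\{|\mu|=1\}=\{\mu_1,\dots,\mu_{\ell_1}\}$; "$\sigma_1$ consists of simple eigenvalues" means each $\mu_m$, $m\le\ell_1$, has algebraic multiplicity $1$. $\tilde\lambda_m^k=\mathrm i(\arg\mu_m+2\pi k)$. Known: there are $N_1$ and radii $r^{(k)}$ with $\sum_k(r^{(k)})^2<\infty$ such that for $m\le\ell_1$, $|k|\ge N_1$ the disc of radius $r^{(k)}$ about $\tilde\lambda_m^k$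 contains exactly one root (with multiplicity) $\lambda_m^k$ of $\det\Delta$, which is simple, with $|\lambda_m^k-\tilde\lambda_m^k|\to0$. *)

theory Defs
  imports "HOL-Analysis.Analysis" "HOL-Computational_Algebra.Polynomial"
begin

definition L2_mat :: "(real \<Rightarrow> complex^'n^'n) \<Rightarrow> bool" where
  "L2_mat A \<longleftrightarrow> (\<forall>i j. set_borel_measurable lborel {-1..0} (\<lambda>s. A s $ i $ j) \<and>
      set_integrable lborel {-1..0} (\<lambda>s. (cmod (A s $ i $ j))^2))"

definition Delta :: "complex^'n^'n \<Rightarrow> (real \<Rightarrow> complex^'n^'n) \<Rightarrow> (real \<Rightarrow> complex^'n^'n)
    \<Rightarrow> complex \<Rightarrow> complex^'n^'n" where
  "Delta Am1 A2 A3 z = (\<chi> i j. - z * (if i = j then 1 else 0) + z * exp (- z) * Am1 $ i $ j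
      + z * (LINT s:{-1..0}|lborel. exp (z * of_real s) * A2 s $ i $ j)
      + (LINT s:{-1..0}|lborel. exp (z * of_real s) * A3 s $ i $ j))"

definition DeltaD :: "complex^'n^'n \<Rightarrow> (real \<Rightarrow> complex^'n^'n) \<Rightarrow> (real \<Rightarrow> complex^'n^'n)
    \<Rightarrow> complex \<Rightarrow> complex^'n^'n" where
  "DeltaD Am1 A2 A3 z = (\<chi> i j. deriv (\<lambda>w. Delta Am1 A2 A3 w $ i $ j) z)"

definition cadj :: "complex^'n^'n \<Rightarrow> complex^'n^'n" where
  "cadj M = (\<chi> i j. cnj (M $ j $ i))"

definition DeltaStar :: "complex^'n^'n \<Rightarrow> (real \<Rightarrow> complex^'n^'n) \<Rightarrow> (real \<Rightarrow> complex^'n^'n)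
    \<Rightarrow> complex \<Rightarrow> complex^'n^'n" where
  "DeltaStar Am1 A2 A3 = Delta (cadj Am1) (\<lambda>s. cadj (A2 s)) (\<lambda>s. cadj (A3 s))"

definition cinner :: "complex^'n \<Rightarrow> complex^'n \<Rightarrow> complex" where
  "cinner u v = (\<Sum>i\<in>UNIV. u $ i * cnj (v $ i))"

definition charpoly :: "complex^'n^'n \<Rightarrow> complex poly" where
  "charpoly A = det (\<chi> i j. (if i = j then [:0, 1:] else 0) - [:A $ i $ j:])"

definition sigma1 :: "complex^'n^'n \<Rightarrow> complex set" where
  "sigma1 A = {\<mu>. det (mat \<mu> - A) = 0 \<and> cmod \<mu> = 1}"

definition lam_tilde :: "complex \<Rightarrow> int \<Rightarrow> complex" where
  "lam_tilde \<mu> k = \<i> * of_real (Arg \<mu> + 2 * pi * of_int k)"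

end

theory Submission
  imports Defs
begin

(* Divide Delta by lambda.  Along such a chain e^{-lambda} tends to conj mu, and every
   integral term vanishes by the Riemann-Lebesgue lemma, so Delta(lambda)/lambda tends to
   conj(mu) A - I and Delta'(lambda)/lambda tends to -conj(mu) A.  Consequently normalized kernel
   vectors of Delta(lambda) and Delta*(conj lambda) accumulate only at right and left eigenvectors
   x, y of A for mu, and the quantity of the theorem accumulates only at |<x, y>|.  For a simple
   eigenvalue <x, y> is nonzero.  A compactness argument over all sequences with |k| -> infinity
   turns this into uniform bounds 0 < C1 <= ... <= C2 for large |k|. *)

section \<open>Simple eigenvalues: right and left eigenvectors are not orthogonal\<close>

(* The matrix M with row i replaced by v.  det (row_replace M i (axis j 1)) is the cofactor of
   the entry (i, j) of M, i.e. the (j, i) entry of the adjugate. *)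
definition row_replace :: "'a::comm_ring_1^'n^'n \<Rightarrow> 'n \<Rightarrow> 'a^'n \<Rightarrow> 'a^'n^'n" where
  "row_replace M i v = (\<chi> r. if r = i then v else M $ r)"

definition adj_trace :: "'a::comm_ring_1^'n^'n \<Rightarrow> 'a" where
  "adj_trace M = (\<Sum>i\<in>UNIV. det (row_replace M i (axis i 1)))"

lemma det_row_replace:
  "det (row_replace M i v) = (\<Sum>p\<in>{p. p permutes (UNIV::'n::finite set)}.
      of_int (sign p) * (v $ p i * (\<Prod>r\<in>UNIV-{i}. M $ r $ p r)))"
  unfolding det_def
proof (rule sum.cong[OF refl])
  fix p :: "'n \<Rightarrow> 'n"
  have "(\<Prod>r\<in>UNIV. row_replace M i v $ r $ p r)
      = row_replace M i v $ i $ p i * (\<Prod>r\<in>UNIV-{i}. row_replace M i v $ r $ p r)"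
    by (rule prod.remove) auto
  also have "\<dots> = v $ p i * (\<Prod>r\<in>UNIV-{i}. M $ r $ p r)"
    by (auto simp: row_replace_def intro!: prod.cong)
  finally show "of_int (sign p) * (\<Prod>r\<in>UNIV. row_replace M i v $ r $ p r) =
      of_int (sign p) * (v $ p i * (\<Prod>r\<in>UNIV-{i}. M $ r $ p r))" by simp
qed

lemma sum_axis_mult: "(\<Sum>l\<in>UNIV. (axis j 1 :: 'a::comm_ring_1^'n) $ l * f l) = f j"
proof -
  have "(\<Sum>l\<in>UNIV. (axis j 1 :: 'a^'n) $ l * f l) = (\<Sum>l\<in>UNIV. if l = j then f l else 0)"
    by (rule sum.cong) (auto simp: axis_def)
  then show ?thesis by simp
qed

lemma det_row_replace_linear:
  fixes M :: "'a::comm_ring_1^'n^'n"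
  shows "det (row_replace M i v) = (\<Sum>l\<in>UNIV. v $ l * det (row_replace M i (axis l 1)))"
proof -
  have "(\<Sum>l\<in>UNIV. v $ l * det (row_replace M i (axis l 1))) =
     (\<Sum>p\<in>{p. p permutes (UNIV::'n set)}. \<Sum>l\<in>UNIV. (axis l 1 :: 'a^'n) $ p i *
        (v $ l * (of_int (sign p) * (\<Prod>r\<in>UNIV-{i}. M $ r $ p r))))"
    by (simp add: det_row_replace sum_distrib_left mult_ac) (rule sum.swap)
  also have "\<dots> = det (row_replace M i v)"
    unfolding det_row_replace
  proof (rule sum.cong[OF refl])
    fix p :: "'n \<Rightarrow> 'n"
    have "(axis l 1 :: 'a^'n) $ p i = (axis (p i) 1 :: 'a^'n) $ l" for l
      by (simp add: axis_def)
    then show "(\<Sum>l\<in>UNIV. (axis l 1 :: 'a^'n) $ p i * (v $ l * (of_int (sign p) * (\<Prod>r\<in>UNIV-{i}. M $ r $ p r))))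
       = of_int (sign p) * (v $ p i * (\<Prod>r\<in>UNIV-{i}. M $ r $ p r))"
      by (simp only: sum_axis_mult) (simp add: mult_ac)
  qed
  finally show ?thesis ..
qed

lemma det_row_replace_kernel:
  fixes M :: "'a::field^'n^'n"
  assumes "M *v x = 0" "x \<noteq> 0" "(\<Sum>l\<in>UNIV. v $ l * x $ l) = 0"
  shows "det (row_replace M i v) = 0"
proof -
  have "row_replace M i v *v x = 0"
    using assms(1,3) by (simp add: vec_eq_iff row_replace_def matrix_vector_mult_def)
  then have "\<not> inj ((*v) (row_replace M i v))"
    using assms(2) by (metis inj_eq matrix_vector_mult_0_right)
  then show ?thesis
    by (meson inj_matrix_vector_mult invertible_det_nz)
qed

lemma kernel_of_det_eq_0:
  fixes N :: "'a::field^'n^'n"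
  assumes "det N = 0"
  obtains x where "x \<noteq> 0" "N *v x = 0"
proof -
  have "\<not> invertible N" using assms by (simp add: invertible_det_nz)
  then have "\<not> (\<exists>B. B ** N = mat 1)"
    using matrix_left_right_inverse1 unfolding invertible_def by blast
  then show ?thesis using that by (auto simp: matrix_left_invertible_ker)
qed

lemma has_field_derivative_det_line:
  fixes M V :: "'a::real_normed_field^'n^'n"
  shows "((\<lambda>t. det (\<chi> r l. M$r$l + t * V$r$l)) has_field_derivative
           (\<Sum>i\<in>UNIV. det (row_replace M i (V $ i)))) (at 0)"
proof -
  have "((\<lambda>t. det (\<chi> r l. M$r$l + t * V$r$l)) has_field_derivative
      (\<Sum>p\<in>{p. p permutes (UNIV::'n set)}. of_int (sign p) *
         (\<Sum>r\<in>UNIV. V $ r $ p r * (\<Prod>y\<in>UNIV-{r}. M $ y $ p y + 0 * V $ y $ p y)))) (at 0)"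
    unfolding det_def vec_lambda_beta
    by (intro DERIV_sum DERIV_cmult has_field_derivative_prod derivative_eq_intros) auto
  also have "(\<Sum>p\<in>{p. p permutes (UNIV::'n set)}. of_int (sign p) *
         (\<Sum>r\<in>UNIV. V $ r $ p r * (\<Prod>y\<in>UNIV-{r}. M $ y $ p y + 0 * V $ y $ p y)))
      = (\<Sum>i\<in>UNIV. det (row_replace M i (V $ i)))"
    by (simp add: det_row_replace sum_distrib_left) (rule sum.swap)
  finally show ?thesis .
qed

lemma mat_vector_mult: "(mat c :: 'a::comm_ring_1^'n^'n) *v x = c *s x"
proof -
  have "((mat c :: 'a^'n^'n) *v x) $ i = (\<Sum>j\<in>UNIV. if i = j then c * x$j else 0)" for i
    unfolding matrix_vector_mult_def mat_def vec_lambda_beta by (rule sum.cong) auto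
  then show ?thesis by (simp add: vec_eq_iff)
qed

lemma mat_entry: "(mat c :: 'a::zero^'n^'n) $ i $ l = (if i = l then c else 0)"
  by (simp add: mat_def)

lemma mat_matrix_mult_entry: "(mat c ** A) $ i $ l = c * (A :: 'a::comm_ring_1^'n^'m) $ i $ l"
  unfolding matrix_matrix_mult_def mat_entry by (simp add: if_distrib[of "\<lambda>x. x * _"] cong: if_cong)

lemma mat_matrix_vector_mult: "(mat c ** A) *v x = c *s (A *v (x :: 'a::comm_ring_1^'n))"
  by (simp add: matrix_vector_mul_assoc[symmetric] mat_vector_mult)

lemma poly_charpoly: "poly (charpoly A) z = det (mat z - A)"
proof -
  have poly_det: "poly (det P) z = det (\<chi> i j. poly (P$i$j) z)" for P :: "complex poly^'n^'n"
    unfolding det_def by (simp add: poly_sum poly_prod)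
  show ?thesis
    unfolding charpoly_def poly_det
    by (rule arg_cong[where f=det]) (simp add: vec_eq_iff mat_def)
qed

lemma adj_trace_eq_charpoly_deriv:
  fixes A :: "complex^'n^'n"
  shows "adj_trace (mat \<mu> - A) = poly (pderiv (charpoly A)) \<mu>"
    and "adj_trace (transpose (mat \<mu> - A)) = poly (pderiv (charpoly A)) \<mu>"
proof -
  have deriv: "((\<lambda>t. poly (charpoly A) (t + \<mu>)) has_field_derivative poly (pderiv (charpoly A)) \<mu>) (at 0)"
    using poly_DERIV[of "charpoly A" "0 + \<mu>"] unfolding DERIV_shift by simp
  have axis: "(mat 1 :: complex^'n^'n) $ i = axis i 1" for i
    by (simp add: vec_eq_iff mat_def axis_def)
  have "poly (charpoly A) (t + \<mu>) = det (\<chi> r l. (mat \<mu> - A)$r$l + t * (mat 1 :: complex^'n^'n)$r$l)"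
    for t unfolding poly_charpoly by (rule arg_cong[where f=det]) (simp add: vec_eq_iff mat_def)
  from DERIV_unique[OF has_field_derivative_det_line deriv[unfolded this]]
  show "adj_trace (mat \<mu> - A) = poly (pderiv (charpoly A)) \<mu>"
    unfolding adj_trace_def axis .
  have "poly (charpoly A) (t + \<mu>) = det (transpose (mat (t + \<mu>) - A))" for t
    by (simp add: poly_charpoly)
  also have "transpose (mat (t + \<mu>) - A)
      = (\<chi> r l. (transpose (mat \<mu> - A))$r$l + t * (mat 1 :: complex^'n^'n)$r$l)" for t
    by (simp add: vec_eq_iff mat_def transpose_def)
  finally have "poly (charpoly A) (t + \<mu>) = det (\<chi> r l. (transpose (mat \<mu> - A))$r$l + t * (mat 1 :: complex^'n^'n)$r$l)" for t .
  from DERIV_unique[OF has_field_derivative_det_line deriv[unfolded this]]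
  show "adj_trace (transpose (mat \<mu> - A)) = poly (pderiv (charpoly A)) \<mu>"
    unfolding adj_trace_def axis .
qed

(* The characteristic polynomial is not the zero polynomial, since zI - A is invertible once |z|
   exceeds a bound for the operator norm of A. *)
lemma charpoly_nonzero: "charpoly (A::complex^'n^'n) \<noteq> 0"
proof
  assume "charpoly A = 0"
  obtain B where B: "B > 0" "\<And>x. norm (A *v x) \<le> norm x * B"
    using bounded_linear.pos_bounded[OF matrix_vector_mul_bounded_linear[of A]] by blast
  have "det (mat (of_real (B + 1)) - A) = 0"
    using \<open>charpoly A = 0\<close> poly_charpoly[of A] by simp
  then obtain x where x: "x \<noteq> 0" "(mat (of_real (B + 1)) - A) *v x = 0"
    by (rule kernel_of_det_eq_0)
  then have "A *v x = (B + 1) *\<^sub>R x"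
    by (simp add: matrix_vector_mult_diff_rdistrib mat_vector_mult vec_eq_iff)
       (simp add: scaleR_conv_of_real algebra_simps)
  then have "(B + 1) * norm x \<le> norm x * B"
    using B(1) B(2)[of x] by simp
  then show False using x(1) B(1) by (simp add: algebra_simps)
qed

lemma simple_root_pderiv_nonzero:
  fixes p :: "'a::{idom,semiring_char_0} poly"
  assumes "p \<noteq> 0" "order a p = 1"
  shows "poly (pderiv p) a \<noteq> 0"
proof
  assume d0: "poly (pderiv p) a = 0"
  have root: "poly p a = 0" using assms order_root by fastforce
  then have "order a (pderiv p) = 0" using order_pderiv[OF assms(1)] assms(2) by simp
  then have "pderiv p = 0" using d0 order_root by blast
  then obtain h where "p = [:h:]" using pderiv_iszero by blast
  with root assms(1) show False by simp
qed

lemma adj_trace_simple_eigenvalue: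
  fixes A :: "complex^'n^'n"
  assumes "order \<mu> (charpoly A) = 1"
  shows "adj_trace (mat \<mu> - A) \<noteq> 0" "adj_trace (transpose (mat \<mu> - A)) \<noteq> 0"
  using simple_root_pderiv_nonzero[OF charpoly_nonzero assms]
  by (simp_all add: adj_trace_eq_charpoly_deriv)

(* A nonzero adjugate trace forces the kernel to be at most one-dimensional: otherwise every
   principal cofactor vanishes. *)
lemma kernel_one_dim_of_adj_trace:
  fixes M :: "'a::field^'n^'n"
  assumes D: "adj_trace M \<noteq> 0"
    and x: "M *v x = 0" "x \<noteq> 0" and x': "M *v x' = 0"
  shows "\<exists>c. x' = c *s x"
proof (rule ccontr)
  assume indep: "\<nexists>c. x' = c *s x"
  have "det (row_replace M i (axis i 1)) = 0" for i
  proof (cases "x $ i = 0")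
    case True
    then show ?thesis
      using x by (intro det_row_replace_kernel) (simp_all add: sum_axis_mult)
  next
    case False
    define u where "u = x' $ i *s x - x $ i *s x'"
    have u_nz: "u \<noteq> 0"
    proof
      assume "u = 0"
      then have "x' = (x' $ i / x $ i) *s x"
        using False by (simp add: u_def vec_eq_iff field_simps)
      with indep show False by blast
    qed
    have Mu: "M *v u = 0"
      using x(1) x' by (simp add: u_def matrix_vector_mult_diff_distrib vector_scalar_commute)
    have "u $ i = 0" by (simp add: u_def)
    then show ?thesis
      by (intro det_row_replace_kernel[OF Mu u_nz]) (simp add: sum_axis_mult)
  qed
  with D show False by (simp add: adj_trace_def)
qed

(* Proof: det (M + tV) vanishes identically when V only
   adds a multiple of column k to column j, so its derivative at 0 vanishes as well. *)
lemma singular_cofactor_column_relation: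
  fixes M :: "'a::real_normed_field^'n^'n"
  assumes "det M = 0"
  shows "(\<Sum>i\<in>UNIV. M$i$k * det (row_replace M i (axis j 1))) = 0"
proof -
  define V :: "'a^'n^'n" where "V = (\<chi> r l. if l = j then M$r$k else 0)"
  have const: "det (\<chi> r l. M$r$l + t * V$r$l) = 0" for t
  proof -
    let ?K = "(\<chi> r l. M$r$l + t * V$r$l) :: 'a^'n^'n"
    let ?T = "transpose M"
    have "det ?K = det (transpose ?K)" by simp
    also have "\<dots> = 0"
    proof (cases "k = j")
      case True
      have "transpose ?K = (\<chi> r. if r = j then (1 + t) *s row j ?T else row r ?T)"
        using True by (simp add: vec_eq_iff transpose_def row_def V_def algebra_simps)
      also have "det \<dots> = (1 + t) * det (\<chi> r. if r = j then row j ?T else row r ?T)"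
        by (simp add: det_row_mul)
      also have "(\<chi> r. if r = j then row j ?T else row r ?T) = ?T"
        by (simp add: vec_eq_iff row_def)
      finally show ?thesis using assms by simp
    next
      case False
      have "transpose ?K = (\<chi> r. if r = j then row j ?T + t *s row k ?T else row r ?T)"
        using False by (simp add: vec_eq_iff transpose_def row_def V_def algebra_simps)
      then have "det (transpose ?K) = det ?T"
        using det_row_operation[of j k ?T t] False by simp
      then show ?thesis using assms by simp
    qed
    finally show ?thesis .
  qed
  have "((\<lambda>t. det (\<chi> r l. M$r$l + t * V$r$l)) has_field_derivative 0) (at 0)"
    unfolding const by simp
  from DERIV_unique[OF has_field_derivative_det_line this]
  have "(\<Sum>i\<in>UNIV. det (row_replace M i (V $ i))) = 0" .
  moreover have "det (row_replace M i (V $ i)) = M$i$k * det (row_replace M i (axis j 1))" for i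
  proof -
    have "V $ i = M$i$k *s axis j 1" by (simp add: V_def vec_eq_iff axis_def)
    then show ?thesis
      by (subst det_row_replace_linear) (simp add: mult.assoc sum_distrib_left[symmetric] sum_axis_mult)
  qed
  ultimately show ?thesis by simp
qed

lemma cofactor_row_proportional:
  fixes M :: "'a::field^'n^'n"
  assumes x: "M *v x = 0" and j: "x $ j \<noteq> 0"
  shows "det (row_replace M i (axis l 1)) = x$l / x$j * det (row_replace M i (axis j 1))"
proof -
  define v :: "'a^'n" where "v = axis l 1 - (x$l / x$j) *s axis j 1"
  have comb: "(\<Sum>l'\<in>UNIV. v $ l' * f l') = f l - x$l / x$j * f j" for f :: "'n \<Rightarrow> 'a"
  proof -
    have "(\<Sum>l'\<in>UNIV. v $ l' * f l')
        = (\<Sum>l'\<in>UNIV. (axis l 1 :: 'a^'n) $ l' * f l' - x$l / x$j * ((axis j 1 :: 'a^'n) $ l' * f l'))"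
      by (simp add: v_def algebra_simps)
    then show ?thesis by (simp only: sum_subtractf sum_distrib_left[symmetric] sum_axis_mult)
  qed
  have "x \<noteq> 0" using j by auto
  have "det (row_replace M i v) = 0"
    using j by (intro det_row_replace_kernel[OF x \<open>x \<noteq> 0\<close>]) (simp add: comb)
  moreover have "det (row_replace M i v)
      = det (row_replace M i (axis l 1)) - x$l / x$j * det (row_replace M i (axis j 1))"
    by (subst det_row_replace_linear) (rule comb)
  ultimately show ?thesis by simp
qed

(* If the adjugate traces of M and of its transpose are nonzero, right and left kernel vectors x
   and w of M satisfy sum_i w_i x_i ~= 0: the adjugate trace is a multiple of this pairing, because
   the cofactor matrix has rows proportional to x and columns in the one-dimensional left kernel. *)
lemma kernel_pairing_nonzero:
  fixes M :: "'a::real_normed_field^'n^'n"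
  assumes D: "adj_trace M \<noteq> 0" and DT: "adj_trace (transpose M) \<noteq> 0"
    and x: "M *v x = 0" "x \<noteq> 0" and w: "transpose M *v w = 0" "w \<noteq> 0"
  shows "(\<Sum>i\<in>UNIV. w$i * x$i) \<noteq> 0"
proof
  assume wx: "(\<Sum>i\<in>UNIV. w$i * x$i) = 0"
  obtain j where j: "x $ j \<noteq> 0" using x(2) by (auto simp: vec_eq_iff)
  define C where "C i l = det (row_replace M i (axis l 1))" for i l
  have "row_replace M j (M $ j) = M"
    unfolding row_replace_def by (simp add: vec_eq_iff)
  then have "det M = det (row_replace M j (M $ j))" by simp
  also have "\<dots> = 0"
    using x(1) by (intro det_row_replace_kernel[OF x]) (simp add: vec_eq_iff matrix_vector_mult_def)
  finally have "det M = 0" .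
  define \<alpha> :: "'a^'n" where "\<alpha> = (\<chi> i. C i j / x$j)"
  have "transpose M *v \<alpha> = 0"
  proof -
    have "(\<Sum>i\<in>UNIV. M$i$k * C i j) = 0" for k
      unfolding C_def by (rule singular_cofactor_column_relation[OF \<open>det M = 0\<close>])
    then have "(\<Sum>i\<in>UNIV. M$i$k * (C i j / x$j)) = 0" for k
      by (simp add: sum_divide_distrib[symmetric])
    then show ?thesis by (simp add: vec_eq_iff transpose_def matrix_vector_mult_def \<alpha>_def)
  qed
  then obtain c where c: "\<alpha> = c *s w" using kernel_one_dim_of_adj_trace[OF DT w] by blast
  have "adj_trace M = (\<Sum>i\<in>UNIV. \<alpha>$i * x$i)"
    unfolding adj_trace_def
  proof (rule sum.cong[OF refl])
    fix i
    have "det (row_replace M i (axis i 1)) = x$i / x$j * C i j"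
      unfolding C_def by (rule cofactor_row_proportional[OF x(1) j])
    then show "det (row_replace M i (axis i 1)) = \<alpha>$i * x$i" by (simp add: \<alpha>_def)
  qed
  also have "\<dots> = c * (\<Sum>i\<in>UNIV. w$i * x$i)"
    by (simp add: c sum_distrib_left mult.assoc)
  finally show False using wx D by simp
qed

lemma simple_eigenvalue_eigenvectors_nonorthogonal:
  fixes A :: "complex^'n^'n"
  assumes simple: "order \<mu> (charpoly A) = 1"
    and x: "A *v x = \<mu> *s x" "x \<noteq> 0" and y: "cadj A *v y = cnj \<mu> *s y" "y \<noteq> 0"
  shows "cinner x y \<noteq> 0"
proof -
  define w :: "complex^'n" where "w = (\<chi> i. cnj (y $ i))"
  have "w \<noteq> 0" using y(2) by (simp add: w_def vec_eq_iff)
  have Mx: "(mat \<mu> - A) *v x = 0"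
    using x(1) by (simp add: matrix_vector_mult_diff_rdistrib mat_vector_mult)
  have "(transpose A *v w) $ i = cnj ((cadj A *v y) $ i)" for i
    by (simp add: w_def transpose_def cadj_def matrix_vector_mult_def mult.commute)
  then have "transpose A *v w = \<mu> *s w"
    using y(1) by (simp add: vec_eq_iff w_def)
  moreover have "transpose (mat \<mu> - A) = mat \<mu> - transpose A"
    by (simp add: vec_eq_iff transpose_def mat_def)
  ultimately have Mw: "transpose (mat \<mu> - A) *v w = 0"
    by (simp add: matrix_vector_mult_diff_rdistrib mat_vector_mult)
  have "(\<Sum>i\<in>UNIV. w$i * x$i) \<noteq> 0"
    using kernel_pairing_nonzero[OF adj_trace_simple_eigenvalue[OF simple] Mx x(2) Mw \<open>w \<noteq> 0\<close>] .
  then show ?thesis by (simp add: cinner_def w_def mult.commute)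
qed

section \<open>Finite Laplace transforms and the Riemann-Lebesgue lemma on [-1,0]\<close>

lemma exp_minus_one_minus_id_bound:
  fixes w :: complex
  assumes "cmod w \<le> 1"
  shows "cmod (exp w - 1 - w) \<le> (cmod w)^2"
proof -
  have s: "summable (\<lambda>n. norm (inverse (fact (n + 2)) *\<^sub>R (w ^ (n + 2))))"
    using summable_ignore_initial_segment[OF summable_norm_exp[of w], of 2] by simp
  have sr: "summable (\<lambda>n. inverse (fact (n + 2)) * (cmod w ^ (n + 2)))"
    using summable_ignore_initial_segment[OF summable_exp[of "cmod w"], of 2] by simp
  have "cmod (exp w - 1 - w) = norm (\<Sum>n. inverse (fact (n + 2)) *\<^sub>R (w ^ (n + 2)))"
    by (subst exp_first_two_terms) simp
  also have "\<dots> \<le> (\<Sum>n. norm (inverse (fact (n + 2)) *\<^sub>R (w ^ (n + 2))))"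
    by (rule summable_norm[OF s])
  also have "\<dots> \<le> (\<Sum>n. inverse (fact (n + 2)) * (cmod w ^ (n + 2)))"
    by (intro suminf_le s sr) (simp add: norm_power norm_mult)
  also have "\<dots> = exp (cmod w) - 1 - cmod w"
    by (subst exp_first_two_terms) simp
  also have "\<dots> \<le> (cmod w)^2" using exp_bound[of "cmod w"] assms by simp
  finally show ?thesis .
qed

lemma norm_mult_unit_interval:
  assumes "s \<in> {-1..0::real}"
  shows "cmod (h * of_real s) \<le> cmod h"
proof -
  have "\<bar>s\<bar> \<le> 1" using assms by auto
  then have "cmod h * \<bar>s\<bar> \<le> cmod h * 1" by (intro mult_left_mono) auto
  then show ?thesis by (simp add: norm_mult)
qed

definition sq_integrable :: "(real \<Rightarrow> complex) \<Rightarrow> bool" where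
  "sq_integrable f \<longleftrightarrow> set_borel_measurable lborel {-1..0} f \<and>
     set_integrable lborel {-1..0::real} (\<lambda>s. (cmod (f s))^2)"

definition integral_against :: "(real \<Rightarrow> complex) \<Rightarrow> (real \<Rightarrow> complex) \<Rightarrow> complex" where
  "integral_against \<phi> f = (LINT s:{-1..0::real}|lborel. \<phi> s * f s)"

lemma sq_integrable_imp_integrable:
  assumes "sq_integrable f" shows "set_integrable lborel {-1..0::real} f"
proof (rule set_integrable_bound[where f="\<lambda>s. 1 + (cmod (f s))^2"])
  have "set_integrable lborel {-1..0::real} (\<lambda>s. 1::real)"
    by (rule borel_integrable_atLeastAtMost') simp
  then show "set_integrable lborel {-1..0::real} (\<lambda>s. 1 + (cmod (f s))^2)"
    using assms unfolding sq_integrable_def by (intro set_integral_add) auto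
  show "set_borel_measurable lborel {-1..0} f" using assms unfolding sq_integrable_def by simp
  have "r \<le> 1 + r^2" for r :: real
    using zero_le_power2[of "r - 1/2"] by (simp add: power2_eq_square algebra_simps)
  then show "AE x in lborel. x \<in> {-1..0} \<longrightarrow> norm (f x) \<le> norm (1 + (cmod (f x))\<^sup>2)"
    by (intro AE_I2) simp
qed

lemma set_borel_measurable_continuous_mult:
  fixes f \<phi> :: "real \<Rightarrow> complex"
  assumes f: "set_borel_measurable lborel {-1..0} f" and \<phi>: "continuous_on UNIV \<phi>"
  shows "set_borel_measurable lborel {-1..0} (\<lambda>s. \<phi> s * f s)"
proof -
  have [measurable]: "\<phi> \<in> borel_measurable lborel"
    using borel_measurable_continuous_onI[OF \<phi>] by simp
  have [measurable]: "(\<lambda>s. indicator {-1..0::real} s *\<^sub>R f s) \<in> borel_measurable lborel"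
    using f unfolding set_borel_measurable_def .
  have "(\<lambda>s. \<phi> s * (indicator {-1..0::real} s *\<^sub>R f s)) \<in> borel_measurable lborel" by measurable
  then show ?thesis unfolding set_borel_measurable_def by (simp add: mult.left_commute)
qed

lemma integrable_continuous_mult:
  fixes \<phi> f :: "real \<Rightarrow> complex"
  assumes f: "set_integrable lborel {-1..0::real} f" and \<phi>: "continuous_on UNIV \<phi>"
  shows "set_integrable lborel {-1..0::real} (\<lambda>s. \<phi> s * f s)"
proof -
  have "compact (\<phi> ` {-1..0})"
    by (rule compact_continuous_image) (auto intro: continuous_on_subset[OF \<phi>])
  then obtain B where B: "\<And>s. s \<in> {-1..0} \<Longrightarrow> cmod (\<phi> s) \<le> B"
    by (meson bounded_iff compact_imp_bounded imageI)
  show ?thesis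
  proof (rule set_integrable_bound[where f="\<lambda>s. complex_of_real B * f s"])
    show "set_integrable lborel {-1..0::real} (\<lambda>s. complex_of_real B * f s)"
      using f by (intro set_integrable_mult_right) auto
    have "set_borel_measurable lborel {-1..0} f"
      using f unfolding set_integrable_def set_borel_measurable_def by (rule borel_measurable_integrable)
    then show "set_borel_measurable lborel {-1..0} (\<lambda>s. \<phi> s * f s)"
      by (rule set_borel_measurable_continuous_mult[OF _ \<phi>])
    show "AE x in lborel. x \<in> {-1..0} \<longrightarrow> norm (\<phi> x * f x) \<le> norm (complex_of_real B * f x)"
      using B by (intro AE_I2) (auto simp: norm_mult intro!: mult_right_mono order_trans[OF _ abs_ge_self])
  qed
qed

lemma integral_against_bound:
  assumes f: "set_integrable lborel {-1..0::real} f"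
    and \<phi>: "continuous_on UNIV \<phi>" and B: "\<And>s. s \<in> {-1..0} \<Longrightarrow> cmod (\<phi> s) \<le> B"
  shows "cmod (integral_against \<phi> f) \<le> B * (LINT s:{-1..0::real}|lborel. cmod (f s))"
proof -
  have "cmod (integral_against \<phi> f) \<le> (LINT s:{-1..0::real}|lborel. cmod (\<phi> s * f s))"
    unfolding integral_against_def
    by (rule set_integral_norm_bound[OF integrable_continuous_mult[OF f \<phi>]])
  also have "\<dots> \<le> (LINT s:{-1..0::real}|lborel. B * cmod (f s))"
  proof (rule set_integral_mono)
    show "set_integrable lborel {-1..0} (\<lambda>s. cmod (\<phi> s * f s))"
      by (rule set_integrable_norm[OF integrable_continuous_mult[OF f \<phi>]])
    show "set_integrable lborel {-1..0} (\<lambda>s. B * cmod (f s))"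
      using set_integrable_norm[OF f] by (intro set_integrable_mult_right) auto
    show "cmod (\<phi> s * f s) \<le> B * cmod (f s)" if "s \<in> {-1..0}" for s
      using B[OF that] by (simp add: norm_mult mult_right_mono)
  qed
  also have "\<dots> = B * (LINT s:{-1..0::real}|lborel. cmod (f s))" by simp
  finally show ?thesis .
qed

lemma integral_against_add:
  assumes "set_integrable lborel {-1..0::real} f" "continuous_on UNIV \<phi>" "continuous_on UNIV \<psi>"
  shows "integral_against (\<lambda>s. \<phi> s + \<psi> s) f = integral_against \<phi> f + integral_against \<psi> f"
  unfolding integral_against_def distrib_right
  by (rule set_integral_add(2)) (intro integrable_continuous_mult assms)+

lemma integral_against_diff:
  assumes "set_integrable lborel {-1..0::real} f" "continuous_on UNIV \<phi>" "continuous_on UNIV \<psi>"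
  shows "integral_against (\<lambda>s. \<phi> s - \<psi> s) f = integral_against \<phi> f - integral_against \<psi> f"
  unfolding integral_against_def left_diff_distrib
  by (rule set_integral_diff(2)) (intro integrable_continuous_mult assms)+

lemma integral_against_cmult: "integral_against (\<lambda>s. a * \<phi> s) f = a * integral_against \<phi> f"
  unfolding integral_against_def by (simp add: mult.assoc)

lemma integral_against_sum:
  assumes "set_integrable lborel {-1..0::real} f"
    and "finite K" "\<And>k. k \<in> K \<Longrightarrow> continuous_on UNIV (\<phi> k)"
  shows "integral_against (\<lambda>s. \<Sum>k\<in>K. \<phi> k s) f = (\<Sum>k\<in>K. integral_against (\<phi> k) f)"
  using assms(2,3)
proof (induction K rule: finite_induct)
  case empty then show ?case by (simp add: integral_against_def)
next
  case (insert k K)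
  then have "integral_against (\<lambda>s. \<phi> k s + (\<Sum>k\<in>K. \<phi> k s)) f
      = integral_against (\<phi> k) f + integral_against (\<lambda>s. \<Sum>k\<in>K. \<phi> k s) f"
    by (intro integral_against_add assms(1)) (auto intro!: continuous_intros)
  with insert show ?case by simp
qed

definition laplace :: "(real \<Rightarrow> complex) \<Rightarrow> complex \<Rightarrow> complex" where
  "laplace f z = integral_against (\<lambda>s. exp (z * of_real s)) f"

lemma exp_difference_quotient_bound:
  assumes s: "s \<in> {-1..0::real}" and h: "h \<noteq> 0" "cmod h \<le> 1"
  shows "cmod (inverse h * (exp ((z + h) * of_real s) - exp (z * of_real s)) - exp (z * of_real s) * of_real s)
    \<le> exp \<bar>Re z\<bar> * cmod h"
proof -
  let ?E = "exp (h * of_real s) - 1 - h * of_real s"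
  have "cmod (exp (z * of_real s)) \<le> exp \<bar>Re z\<bar>"
    using norm_mult_unit_interval[OF s, of "of_real (Re z)"] abs_ge_self[of "Re z * s"]
    by (simp add: norm_mult abs_mult)
  moreover have "cmod (inverse h * ?E) \<le> cmod h"
  proof -
    have "cmod (inverse h * ?E) = cmod ?E / cmod h"
      by (simp add: norm_mult norm_inverse divide_inverse mult.commute)
    also have "\<dots> \<le> (cmod h)^2 / cmod h"
      using exp_minus_one_minus_id_bound[of "h * of_real s"] norm_mult_unit_interval[OF s, of h] h(2)
      by (intro divide_right_mono) (auto intro: order_trans power_mono)
    also have "\<dots> = cmod h" by (simp add: power2_eq_square)
    finally show ?thesis .
  qed
  ultimately have "cmod (exp (z * of_real s) * (inverse h * ?E)) \<le> exp \<bar>Re z\<bar> * cmod h"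
    unfolding norm_mult[of "exp (z * of_real s)"] by (rule mult_mono) auto
  moreover have "inverse h * (exp ((z + h) * of_real s) - exp (z * of_real s)) - exp (z * of_real s) * of_real s
      = exp (z * of_real s) * (inverse h * ?E)"
    using h by (simp add: distrib_right exp_add field_simps)
  ultimately show ?thesis by simp
qed

lemma laplace_has_field_derivative:
  assumes f: "set_integrable lborel {-1..0::real} f"
  shows "(laplace f has_field_derivative laplace (\<lambda>s. of_real s * f s) z) (at z)"
proof -
  define K where "K = exp \<bar>Re z\<bar> * (LINT s:{-1..0::real}|lborel. cmod (f s))"
  define D where "D h = (laplace f (z + h) - laplace f z) / h - laplace (\<lambda>s. of_real s * f s) z" for h
  have D_bound: "cmod (D h) \<le> K * cmod h" if h: "h \<noteq> 0" "cmod h \<le> 1" for h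
  proof -
    have "D h = integral_against (\<lambda>s. inverse h * (exp ((z + h) * of_real s) - exp (z * of_real s))
        - exp (z * of_real s) * of_real s) f"
      unfolding D_def laplace_def
      by (subst integral_against_diff[OF f], (intro continuous_intros)+, subst integral_against_cmult,
          subst integral_against_diff[OF f], (intro continuous_intros)+)
         (simp add: integral_against_def divide_inverse mult_ac)
    also have "cmod \<dots> \<le> (exp \<bar>Re z\<bar> * cmod h) * (LINT s:{-1..0::real}|lborel. cmod (f s))"
      by (rule integral_against_bound[OF f _ exp_difference_quotient_bound[OF _ h]])
         (intro continuous_intros)
    finally show ?thesis by (simp add: K_def mult_ac)
  qed
  have "(D \<longlongrightarrow> 0) (at 0)"
  proof (rule Lim_null_comparison)
    show "\<forall>\<^sub>F h in at 0. cmod (D h) \<le> K * cmod h"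
      unfolding eventually_at by (intro exI[of _ 1]) (auto intro!: D_bound)
    show "((\<lambda>h. K * cmod h) \<longlongrightarrow> 0) (at (0::complex))"
      by (intro tendsto_mult_right_zero tendsto_norm_zero tendsto_ident_at)
  qed
  then have "((\<lambda>h. D h + laplace (\<lambda>s. of_real s * f s) z) \<longlongrightarrow> 0 + laplace (\<lambda>s. of_real s * f s) z) (at 0)"
    by (intro tendsto_add tendsto_const)
  then show ?thesis unfolding DERIV_def D_def by simp
qed

definition fourier_mode :: "int \<Rightarrow> real \<Rightarrow> complex" where
  "fourier_mode k s = exp (\<i> * complex_of_real (2 * pi * real_of_int k * s))"

definition fourier_coeff :: "(real \<Rightarrow> complex) \<Rightarrow> int \<Rightarrow> complex" where
  "fourier_coeff g k = integral_against (fourier_mode k) g"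

lemma continuous_on_fourier_mode [continuous_intros]: "continuous_on UNIV (fourier_mode k)"
  unfolding fourier_mode_def by (intro continuous_intros)

lemma fourier_mode_mult_cnj: "fourier_mode k s * cnj (fourier_mode l s) = fourier_mode (k - l) s"
  unfolding fourier_mode_def exp_cnj by (simp add: exp_add[symmetric] algebra_simps)

lemma integral_fourier_mode:
  "(LINT s:{-1..0::real}|lborel. fourier_mode n s) = (if n = 0 then 1 else 0)"
proof (cases "n = 0")
  case True
  then show ?thesis by (simp add: fourier_mode_def set_integral_const)
next
  case False
  define c where "c = \<i> * complex_of_real (2 * pi * real_of_int n)"
  have c0: "c \<noteq> 0" using False by (simp add: c_def)
  define G where "G w = exp (c * w) / c" for w
  have "(LINT s:{-1..0::real}|lborel. fourier_mode n s) = G (complex_of_real 0) - G (complex_of_real (-1))"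
    unfolding set_lebesgue_integral_def
  proof (rule integral_FTC_atLeastAtMost[where F="\<lambda>x. G (complex_of_real x)"])
    show "continuous_on {-1..0} (fourier_mode n)"
      by (rule continuous_on_subset[OF continuous_on_fourier_mode]) simp
    fix x :: real
    have "(G has_field_derivative exp (c * complex_of_real x)) (at (complex_of_real x))"
      unfolding G_def using c0 by (auto intro!: derivative_eq_intros)
    moreover have "fourier_mode n x = exp (c * complex_of_real x)"
      unfolding fourier_mode_def c_def by (simp add: mult_ac)
    ultimately show "((\<lambda>x. G (complex_of_real x)) has_vector_derivative fourier_mode n x) (at x within {-1..0})"
      by (simp add: has_vector_derivative_real_field)
  qed simp
  also have "\<dots> = 0"
  proof -
    have "exp (- c) = exp (\<i> * (of_int (-n) * (of_real pi * 2)))"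
      unfolding c_def by (simp add: mult_ac)
    also have "\<dots> = 1" by (rule exp_2pi_1_int)
    finally show ?thesis unfolding G_def by simp
  qed
  finally show ?thesis using False by simp
qed

lemma fourier_mode_orthonormal:
  "(LINT s:{-1..0::real}|lborel. fourier_mode k s * cnj (fourier_mode l s)) = (if k = l then 1 else 0)"
  unfolding fourier_mode_mult_cnj integral_fourier_mode by simp

lemma set_integrable_Re:
  fixes f :: "real \<Rightarrow> complex"
  assumes "set_integrable lborel A f" shows "set_integrable lborel A (\<lambda>x. Re (f x))"
  using integrable_Re[OF assms[unfolded set_integrable_def]] unfolding set_integrable_def by simp

lemma set_integral_Re:
  fixes f :: "real \<Rightarrow> complex"
  assumes "set_integrable lborel A f" shows "(LINT x:A|lborel. Re (f x)) = Re (LINT x:A|lborel. f x)"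
  using integral_Re[OF assms[unfolded set_integrable_def]] unfolding set_lebesgue_integral_def by simp

lemma integrable_one: "set_integrable lborel {-1..0::real} (\<lambda>_. 1::complex)"
  by (rule borel_integrable_atLeastAtMost') simp

lemma integral_norm_sq_trig_poly:
  fixes c :: "int \<Rightarrow> complex"
  assumes K: "finite K"
  shows "(LINT s:{-1..0::real}|lborel. (cmod (\<Sum>k\<in>K. c k * cnj (fourier_mode k s)))^2)
    = (\<Sum>k\<in>K. (cmod (c k))^2)"
proof -
  define h where "h s = (\<Sum>k\<in>K. c k * cnj (fourier_mode k s))" for s
  have "complex_of_real (LINT s:{-1..0::real}|lborel. (cmod (h s))^2)
      = integral_against (\<lambda>s. h s * cnj (h s)) (\<lambda>_. 1)"
    unfolding integral_against_def set_integral_complex_of_real[symmetric]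
    by (simp only: complex_norm_square mult_1_right)
  also have "\<dots> = integral_against (\<lambda>s. \<Sum>l\<in>K. \<Sum>k\<in>K.
      (c k * cnj (c l)) * (fourier_mode l s * cnj (fourier_mode k s))) (\<lambda>_. 1)"
    unfolding h_def by (simp add: sum_distrib_left sum_distrib_right mult_ac)
  also have "\<dots> = (\<Sum>l\<in>K. \<Sum>k\<in>K. integral_against (\<lambda>s.
      (c k * cnj (c l)) * (fourier_mode l s * cnj (fourier_mode k s))) (\<lambda>_. 1))"
    using K by (simp add: integral_against_sum[OF integrable_one] continuous_intros)
  also have "\<dots> = (\<Sum>l\<in>K. \<Sum>k\<in>K. (c k * cnj (c l)) * (if l = k then 1 else 0))"
    unfolding integral_against_cmult by (simp add: integral_against_def fourier_mode_orthonormal)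
  also have "\<dots> = complex_of_real (\<Sum>k\<in>K. (cmod (c k))^2)"
    using K by (simp add: complex_norm_square if_distrib[of "\<lambda>x. _ * x"] del: of_real_power cong: if_cong)
  finally show ?thesis unfolding h_def of_real_eq_iff .
qed

(* Bessel's inequality: expand 0 <= int |g - h|^2 for the partial Fourier sum h. *)
lemma bessel_inequality:
  assumes g: "sq_integrable g" and K: "finite K"
  shows "(\<Sum>k\<in>K. (cmod (fourier_coeff g k))^2) \<le> (LINT s:{-1..0::real}|lborel. (cmod (g s))^2)"
proof -
  let ?I = "\<lambda>F. LINT s:{-1..0::real}|lborel. F s"
  define SS where "SS = (\<Sum>k\<in>K. (cmod (fourier_coeff g k))^2)"
  define h where "h s = (\<Sum>k\<in>K. fourier_coeff g k * cnj (fourier_mode k s))" for s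
  have gi: "set_integrable lborel {-1..0::real} g" using g by (rule sq_integrable_imp_integrable)
  have gg: "set_integrable lborel {-1..0::real} (\<lambda>s. (cmod (g s))^2)"
    using g by (simp add: sq_integrable_def)
  have hc: "continuous_on UNIV h" unfolding h_def by (intro continuous_intros)
  have hh: "set_integrable lborel {-1..0::real} (\<lambda>s. (cmod (h s))^2)"
    by (rule borel_integrable_atLeastAtMost') (intro continuous_intros continuous_on_subset[OF hc], auto)
  have "set_integrable lborel {-1..0::real} (\<lambda>s. cnj (h s) * g s)"
    using gi by (rule integrable_continuous_mult) (intro continuous_intros hc)
  then have gh: "set_integrable lborel {-1..0::real} (\<lambda>s. g s * cnj (h s))"
    by (simp add: mult.commute)
  then have Re_int: "set_integrable lborel {-1..0::real} (\<lambda>s. 2 * Re (g s * cnj (h s)))"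
    by (intro set_integrable_mult_right set_integrable_Re)
  have "(LINT s:{-1..0::real}|lborel. g s * cnj (h s)) = integral_against (\<lambda>s. cnj (h s)) g"
    by (simp add: integral_against_def mult.commute)
  also have "\<dots> = (\<Sum>k\<in>K. cnj (fourier_coeff g k) * fourier_coeff g k)"
    unfolding h_def using K
    by (simp add: integral_against_sum[OF gi] integral_against_cmult fourier_coeff_def continuous_intros)
  also have "\<dots> = complex_of_real SS"
    unfolding SS_def by (simp add: complex_norm_square mult.commute del: of_real_power)
  finally have "?I (\<lambda>s. Re (g s * cnj (h s))) = SS"
    by (simp only: set_integral_Re[OF gh] Re_complex_of_real)
  then have Re_part: "?I (\<lambda>s. 2 * Re (g s * cnj (h s))) = 2 * SS"
    by (simp only: set_integral_mult_right)
  have h_part: "?I (\<lambda>s. (cmod (h s))^2) = SS"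
    unfolding h_def SS_def using K by (rule integral_norm_sq_trig_poly)
  have "(cmod (g s - h s))^2 = (cmod (g s))^2 - 2 * Re (g s * cnj (h s)) + (cmod (h s))^2" for s
    by (simp only: cmod_power2) (simp add: power2_eq_square algebra_simps)
  then have "?I (\<lambda>s. (cmod (g s - h s))^2)
      = ?I (\<lambda>s. (cmod (g s))^2 - 2 * Re (g s * cnj (h s)) + (cmod (h s))^2)"
    by (simp only:)
  also have "\<dots> = ?I (\<lambda>s. (cmod (g s))^2) - ?I (\<lambda>s. 2 * Re (g s * cnj (h s))) + ?I (\<lambda>s. (cmod (h s))^2)"
    by (simp only: set_integral_add(2)[OF set_integral_diff(1)[OF gg Re_int] hh]
                   set_integral_diff(2)[OF gg Re_int])
  finally have expand: "?I (\<lambda>s. (cmod (g s - h s))^2) = ?I (\<lambda>s. (cmod (g s))^2) - SS"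
    using Re_part h_part by simp
  have "0 \<le> ?I (\<lambda>s. (cmod (g s - h s))^2)"
    unfolding set_lebesgue_integral_def by (intro Bochner_Integration.integral_nonneg_AE AE_I2) simp
  then show ?thesis unfolding expand SS_def by simp
qed

(* By Bessel's inequality only finitely many Fourier coefficients exceed any e > 0. *)
lemma fourier_coeff_tendsto_zero:
  assumes g: "sq_integrable g"
  shows "(fourier_coeff g \<longlongrightarrow> 0) cofinite"
proof (rule tendstoI)
  fix e :: real assume e: "e > 0"
  define I where "I = (LINT s:{-1..0::real}|lborel. (cmod (g s))^2)"
  have "finite {k. e \<le> cmod (fourier_coeff g k)}"
  proof (rule ccontr)
    define n where "n = nat \<lceil>I / e^2\<rceil> + 1"
    assume "infinite {k. e \<le> cmod (fourier_coeff g k)}"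
    then obtain B where B: "finite B" "card B = n" "B \<subseteq> {k. e \<le> cmod (fourier_coeff g k)}"
      using infinite_arbitrarily_large by blast
    have "real n * e^2 = (\<Sum>k\<in>B. e^2)" using B by simp
    also have "\<dots> \<le> (\<Sum>k\<in>B. (cmod (fourier_coeff g k))^2)"
      using B e by (intro sum_mono power_mono) auto
    also have "\<dots> \<le> I" unfolding I_def by (rule bessel_inequality[OF g B(1)])
    finally have "real n * e^2 \<le> I" .
    moreover have "I / e^2 < real n" unfolding n_def by linarith
    ultimately show False using e by (simp add: field_simps)
  qed
  then show "\<forall>\<^sub>F k in cofinite. dist (fourier_coeff g k) 0 < e"
    by (simp add: eventually_cofinite not_less)
qed

lemma set_borel_measurable_compose_zero:
  fixes F :: "real \<Rightarrow> 'a::real_normed_vector" and h :: "'a \<Rightarrow> 'b::real_normed_vector"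
  assumes F: "set_borel_measurable lborel S F" and h: "continuous_on UNIV h" "h 0 = 0"
  shows "set_borel_measurable lborel S (\<lambda>s. h (F s))"
proof -
  have "(\<lambda>s. h (indicator S s *\<^sub>R F s)) \<in> borel_measurable lborel"
    using F unfolding set_borel_measurable_def
    by (rule measurable_compose[OF _ borel_measurable_continuous_onI[OF h(1)]])
  moreover have "h (indicator S s *\<^sub>R F s) = indicator S s *\<^sub>R h (F s)" for s
    using h(2) by (simp add: indicator_def)
  ultimately show ?thesis unfolding set_borel_measurable_def by simp
qed

lemma sq_integrable_mult:
  assumes f: "sq_integrable f" and \<phi>: "continuous_on UNIV \<phi>"
    and bound: "\<And>s. s \<in> {-1..0::real} \<Longrightarrow> cmod (\<phi> s) \<le> 1"
  shows "sq_integrable (\<lambda>s. \<phi> s * f s)"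
  unfolding sq_integrable_def
proof
  show meas: "set_borel_measurable lborel {-1..0} (\<lambda>s. \<phi> s * f s)"
    using f \<phi> unfolding sq_integrable_def by (blast intro: set_borel_measurable_continuous_mult)
  show "set_integrable lborel {-1..0::real} (\<lambda>s. (cmod (\<phi> s * f s))^2)"
  proof (rule set_integrable_bound[where f="\<lambda>s. (cmod (f s))^2"])
    show "set_integrable lborel {-1..0::real} (\<lambda>s. (cmod (f s))^2)"
      using f by (simp add: sq_integrable_def)
    show "set_borel_measurable lborel {-1..0} (\<lambda>s. (cmod (\<phi> s * f s))^2)"
      by (rule set_borel_measurable_compose_zero[OF meas, of "\<lambda>w. (cmod w)^2"])
         (auto intro!: continuous_intros)
    show "AE x in lborel. x \<in> {-1..0} \<longrightarrow> norm ((cmod (\<phi> x * f x))^2) \<le> norm ((cmod (f x))^2)"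
      using bound by (intro AE_I2) (simp add: norm_mult power_mono mult_left_le_one_le)
  qed
qed

lemma sq_integrable_cnj:
  assumes "sq_integrable f" shows "sq_integrable (\<lambda>s. cnj (f s))"
  using assms set_borel_measurable_compose_zero[of "{-1..0}" f cnj]
  unfolding sq_integrable_def by (simp add: continuous_intros)

lemma integral_against_exp_perturbation:
  assumes f: "set_integrable lborel {-1..0::real} f"
    and E: "continuous_on UNIV E" "\<And>s. cmod (E s) = 1" and w: "cmod w \<le> 1"
  shows "cmod (integral_against (\<lambda>s. (exp (w * of_real s) - 1) * E s) f)
    \<le> 2 * cmod w * (LINT s:{-1..0::real}|lborel. cmod (f s))"
proof (rule integral_against_bound[OF f])
  show "continuous_on UNIV (\<lambda>s. (exp (w * complex_of_real s) - 1) * E s)"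
    by (intro continuous_intros E)
  fix s :: real assume s: "s \<in> {-1..0}"
  have ws: "cmod (w * of_real s) \<le> cmod w" by (rule norm_mult_unit_interval[OF s])
  have "cmod (exp (w * of_real s) - 1)
      \<le> cmod (exp (w * of_real s) - 1 - w * of_real s) + cmod (w * of_real s)"
    by (rule order.trans[OF _ norm_triangle_ineq]) simp
  also have "\<dots> \<le> (cmod (w * of_real s))^2 + cmod (w * of_real s)"
    using ws w by (intro add_mono exp_minus_one_minus_id_bound) auto
  also have "\<dots> \<le> cmod w + cmod w"
    using ws w by (intro add_mono) (auto simp: power2_eq_square intro: order_trans[OF mult_left_le_one_le])
  finally show "cmod ((exp (w * of_real s) - 1) * E s) \<le> 2 * cmod w"
    by (simp add: norm_mult E(2))
qed

(* Writing
   e^{z_j s} = e^{2 pi i k_j s} e^{i theta s} e^{w_j s}, this is a Fourier coefficient of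
   e^{i theta s} f(s) plus a perturbation of size O(|w_j|). *)
lemma riemann_lebesgue:
  assumes f: "sq_integrable f" and kk: "filterlim kk cofinite F"
    and z: "((\<lambda>j. z j - \<i> * complex_of_real (\<theta> + 2 * pi * real_of_int (kk j))) \<longlongrightarrow> 0) F"
  shows "((\<lambda>j. laplace f (z j)) \<longlongrightarrow> 0) F"
proof -
  have fi: "set_integrable lborel {-1..0::real} f" using f by (rule sq_integrable_imp_integrable)
  define g where "g s = exp (\<i> * complex_of_real (\<theta> * s)) * f s" for s
  have g: "sq_integrable g" unfolding g_def
    by (rule sq_integrable_mult[OF f]) (auto intro!: continuous_intros simp only: norm_exp_i_times)
  define W where "W j = z j - \<i> * complex_of_real (\<theta> + 2 * pi * real_of_int (kk j))" for j
  define E where "E j s = exp (\<i> * complex_of_real ((\<theta> + 2 * pi * real_of_int (kk j)) * s))" for j s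
  have contE: "continuous_on UNIV (E j)" for j unfolding E_def by (intro continuous_intros)
  have normE: "cmod (E j s) = 1" for j s unfolding E_def by (simp only: norm_exp_i_times)
  have split: "laplace f (z j) = fourier_coeff g (kk j)
      + integral_against (\<lambda>s. (exp (W j * of_real s) - 1) * E j s) f" for j
  proof -
    have "exp (z j * of_real s) = E j s + (exp (W j * of_real s) - 1) * E j s" for s
      by (simp add: W_def E_def algebra_simps exp_add[symmetric])
    then have "laplace f (z j) = integral_against (E j) f
        + integral_against (\<lambda>s. (exp (W j * of_real s) - 1) * E j s) f"
      unfolding laplace_def by (simp add: integral_against_add[OF fi contE] continuous_intros contE)
    moreover have "fourier_mode (kk j) s * g s = E j s * f s" for s
      by (simp add: fourier_mode_def g_def E_def algebra_simps exp_add[symmetric])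
    then have "fourier_coeff g (kk j) = integral_against (E j) f"
      by (simp add: fourier_coeff_def integral_against_def)
    ultimately show ?thesis by simp
  qed
  have "((\<lambda>j. fourier_coeff g (kk j)) \<longlongrightarrow> 0) F"
    using filterlim_compose[OF fourier_coeff_tendsto_zero[OF g] kk] .
  moreover have "((\<lambda>j. integral_against (\<lambda>s. (exp (W j * of_real s) - 1) * E j s) f) \<longlongrightarrow> 0) F"
  proof (rule Lim_null_comparison)
    have W0: "(W \<longlongrightarrow> 0) F" using z unfolding W_def .
    then show "((\<lambda>j. 2 * cmod (W j) * (LINT s:{-1..0::real}|lborel. cmod (f s))) \<longlongrightarrow> 0) F"
      by (intro tendsto_mult_left_zero tendsto_mult_right_zero tendsto_norm_zero)
    have "eventually (\<lambda>j. cmod (W j) < 1) F" using W0 by (auto dest: tendstoD[of _ _ _ 1])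
    then show "eventually (\<lambda>j. norm (integral_against (\<lambda>s. (exp (W j * of_real s) - 1) * E j s) f)
        \<le> 2 * cmod (W j) * (LINT s:{-1..0::real}|lborel. cmod (f s))) F"
      by eventually_elim (rule integral_against_exp_perturbation[OF fi contE normE], simp)
  qed
  ultimately have "((\<lambda>j. fourier_coeff g (kk j)
      + integral_against (\<lambda>s. (exp (W j * of_real s) - 1) * E j s) f) \<longlongrightarrow> 0 + 0) F"
    by (rule tendsto_add)
  then show ?thesis unfolding split by simp
qed

section \<open>Asymptotics of Delta and Delta' along the vertical chains\<close>

lemma L2_mat_iff: "L2_mat A \<longleftrightarrow> (\<forall>i j. sq_integrable (\<lambda>s. A s $ i $ j))"
  unfolding L2_mat_def sq_integrable_def by blast

lemma L2_mat_cadj: "L2_mat A \<Longrightarrow> L2_mat (\<lambda>s. cadj (A s))"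
  unfolding L2_mat_iff cadj_def by (simp add: sq_integrable_cnj)

lemma Delta_entry:
  "Delta A A2 A3 z $ i $ j = - z * (if i = j then 1 else 0) + z * exp (- z) * A $ i $ j
     + z * laplace (\<lambda>s. A2 s $ i $ j) z + laplace (\<lambda>s. A3 s $ i $ j) z"
  unfolding Delta_def laplace_def integral_against_def by simp

lemma DeltaD_entry:
  assumes "L2_mat A2" "L2_mat A3"
  shows "DeltaD A A2 A3 z $ i $ j = - (if i = j then 1 else 0) + exp (- z) * A $ i $ j
     - z * exp (- z) * A $ i $ j + laplace (\<lambda>s. A2 s $ i $ j) z
     + z * laplace (\<lambda>s. of_real s * A2 s $ i $ j) z + laplace (\<lambda>s. of_real s * A3 s $ i $ j) z"
proof -
  have integrable_entry: "set_integrable lborel {-1..0::real} (\<lambda>s. B s $ i $ j)" if "L2_mat B" for B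
    using that by (simp add: L2_mat_iff sq_integrable_imp_integrable)
  note deriv = laplace_has_field_derivative[OF integrable_entry[OF assms(1)]]
    laplace_has_field_derivative[OF integrable_entry[OF assms(2)]]
  have "((\<lambda>w. Delta A A2 A3 w $ i $ j) has_field_derivative
      - (if i = j then 1 else 0) + exp (- z) * A $ i $ j - z * exp (- z) * A $ i $ j
      + laplace (\<lambda>s. A2 s $ i $ j) z + z * laplace (\<lambda>s. of_real s * A2 s $ i $ j) z
      + laplace (\<lambda>s. of_real s * A3 s $ i $ j) z) (at z)"
    unfolding Delta_entry
    by (rule derivative_eq_intros deriv refl | simp)+ (simp add: algebra_simps)
  then show ?thesis unfolding DeltaD_def by (simp add: DERIV_imp_deriv)
qed

lemma vertical_chain_at_infinity:
  assumes kk: "filterlim kk cofinite F"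
    and z: "((\<lambda>j. z j - \<i> * complex_of_real (\<theta> + 2 * pi * real_of_int (kk j))) \<longlongrightarrow> 0) F"
  shows "filterlim z at_infinity F"
proof -
  have "filterlim (\<lambda>k::int. \<i> * complex_of_real (\<theta> + 2 * pi * real_of_int k)) at_infinity cofinite"
    unfolding filterlim_at_infinity[OF order_refl]
  proof (intro allI impI)
    fix r :: real
    have "{k::int. \<not> r \<le> cmod (\<i> * complex_of_real (\<theta> + 2 * pi * real_of_int k))}
        \<subseteq> {-\<lceil>r + \<bar>\<theta>\<bar>\<rceil>..\<lceil>r + \<bar>\<theta>\<bar>\<rceil>}"
    proof safe
      fix k :: int assume "\<not> r \<le> cmod (\<i> * complex_of_real (\<theta> + 2 * pi * real_of_int k))"
      then have "\<bar>\<theta> + 2 * pi * real_of_int k\<bar> < r"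
        by (simp only: norm_mult norm_ii norm_of_real mult_1_left not_le)
      moreover have "1 * real_of_int \<bar>k\<bar> \<le> (2 * pi) * real_of_int \<bar>k\<bar>"
        using pi_ge_two by (intro mult_right_mono) auto
      moreover have "(2 * pi) * real_of_int \<bar>k\<bar> = \<bar>2 * pi * real_of_int k\<bar>" by (simp add: abs_mult)
      ultimately have "real_of_int \<bar>k\<bar> \<le> r + \<bar>\<theta>\<bar>" by linarith
      then show "k \<in> {-\<lceil>r + \<bar>\<theta>\<bar>\<rceil>..\<lceil>r + \<bar>\<theta>\<bar>\<rceil>}"
        by (simp add: abs_le_iff ceiling_le_iff le_ceiling_iff) linarith
    qed
    then show "\<forall>\<^sub>F k in cofinite. r \<le> cmod (\<i> * complex_of_real (\<theta> + 2 * pi * real_of_int k))"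
      unfolding eventually_cofinite by (rule finite_subset) simp
  qed
  from filterlim_compose[OF this kk] have
    "filterlim (\<lambda>j. (z j - \<i> * complex_of_real (\<theta> + 2 * pi * real_of_int (kk j)))
       + \<i> * complex_of_real (\<theta> + 2 * pi * real_of_int (kk j))) at_infinity F"
    by (intro tendsto_add_filterlim_at_infinity[OF z])
  then show ?thesis by simp
qed

lemma exp_minus_vertical_chain:
  assumes z: "((\<lambda>j. z j - \<i> * complex_of_real (\<theta> + 2 * pi * real_of_int (kk j))) \<longlongrightarrow> 0) F"
  shows "((\<lambda>j. exp (- z j)) \<longlongrightarrow> exp (- (\<i> * complex_of_real \<theta>))) F"
proof -
  define W where "W j = z j - \<i> * complex_of_real (\<theta> + 2 * pi * real_of_int (kk j))" for j
  have "exp (- z j) = exp (- W j) * exp (- (\<i> * complex_of_real \<theta>))" for j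
  proof -
    have "- z j = (- W j + - (\<i> * complex_of_real \<theta>)) + \<i> * (of_int (- kk j) * (of_real pi * 2))"
      unfolding W_def by (simp add: algebra_simps)
    then show ?thesis by (simp only: exp_add exp_2pi_1_int mult_1_right)
  qed
  moreover have "((\<lambda>j. exp (- W j) * exp (- (\<i> * complex_of_real \<theta>))) \<longlongrightarrow> exp (- 0) * exp (- (\<i> * complex_of_real \<theta>))) F"
    using z unfolding W_def[symmetric] by (intro tendsto_intros)
  ultimately show ?thesis by simp
qed

lemma laplace_entries_vanish:
  fixes A :: "real \<Rightarrow> complex^'n^'n"
  assumes A: "L2_mat A" and kk: "filterlim kk cofinite F"
    and z: "((\<lambda>j. z j - \<i> * complex_of_real (\<theta> + 2 * pi * real_of_int (kk j))) \<longlongrightarrow> 0) F"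
  shows "((\<lambda>j. laplace (\<lambda>s. A s $ i $ l) (z j)) \<longlongrightarrow> 0) F"
    and "((\<lambda>j. laplace (\<lambda>s. of_real s * A s $ i $ l) (z j)) \<longlongrightarrow> 0) F"
proof -
  have "sq_integrable (\<lambda>s. A s $ i $ l)" using A by (simp add: L2_mat_iff)
  moreover from this have "sq_integrable (\<lambda>s. of_real s * A s $ i $ l)"
    by (rule sq_integrable_mult) (auto intro!: continuous_intros)
  ultimately show "((\<lambda>j. laplace (\<lambda>s. A s $ i $ l) (z j)) \<longlongrightarrow> 0) F"
    "((\<lambda>j. laplace (\<lambda>s. of_real s * A s $ i $ l) (z j)) \<longlongrightarrow> 0) F"
    by (simp_all add: riemann_lebesgue[OF _ kk z])
qed

lemma Delta_div_limit:
  fixes A :: "complex^'n^'n" and A2 A3 :: "real \<Rightarrow> complex^'n^'n"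
  assumes L2: "L2_mat A2" "L2_mat A3" and kk: "filterlim kk cofinite F"
    and z: "((\<lambda>j. z j - \<i> * complex_of_real (\<theta> + 2 * pi * real_of_int (kk j))) \<longlongrightarrow> 0) F"
  shows "((\<lambda>j. Delta A A2 A3 (z j) $ i $ l / z j) \<longlongrightarrow>
            - (if i = l then 1 else 0) + exp (- (\<i> * complex_of_real \<theta>)) * A$i$l) F"
proof -
  have zinf: "filterlim z at_infinity F" by (rule vertical_chain_at_infinity[OF kk z])
  let ?d = "(if i = l then 1 else 0) :: complex"
  have "((\<lambda>j. - ?d + exp (- z j) * A$i$l + laplace (\<lambda>s. A2 s $ i $ l) (z j)
      + laplace (\<lambda>s. A3 s $ i $ l) (z j) * inverse (z j))
      \<longlongrightarrow> - ?d + exp (- (\<i> * complex_of_real \<theta>)) * A$i$l + 0 + 0 * 0) F"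
    by (intro tendsto_intros laplace_entries_vanish[OF _ kk z] L2 exp_minus_vertical_chain[OF z]
        filterlim_compose[OF tendsto_inverse_0 zinf])
  moreover have "eventually (\<lambda>j. - ?d + exp (- z j) * A$i$l + laplace (\<lambda>s. A2 s $ i $ l) (z j)
      + laplace (\<lambda>s. A3 s $ i $ l) (z j) * inverse (z j) = Delta A A2 A3 (z j) $ i $ l / z j) F"
    using filterlim_at_infinity_imp_eventually_ne[OF zinf, of 0]
    by eventually_elim (simp add: Delta_entry field_simps)
  ultimately show ?thesis using tendsto_cong by force
qed

lemma DeltaD_div_limit:
  fixes A :: "complex^'n^'n" and A2 A3 :: "real \<Rightarrow> complex^'n^'n"
  assumes L2: "L2_mat A2" "L2_mat A3" and kk: "filterlim kk cofinite F"
    and z: "((\<lambda>j. z j - \<i> * complex_of_real (\<theta> + 2 * pi * real_of_int (kk j))) \<longlongrightarrow> 0) F"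
  shows "((\<lambda>j. DeltaD A A2 A3 (z j) $ i $ l / z j) \<longlongrightarrow> - exp (- (\<i> * complex_of_real \<theta>)) * A$i$l) F"
proof -
  have zinf: "filterlim z at_infinity F" by (rule vertical_chain_at_infinity[OF kk z])
  let ?d = "(if i = l then 1 else 0) :: complex"
  have "((\<lambda>j. (- ?d + exp (- z j) * A$i$l + laplace (\<lambda>s. A2 s $ i $ l) (z j)
        + laplace (\<lambda>s. of_real s * A3 s $ i $ l) (z j)) * inverse (z j)
        - exp (- z j) * A$i$l + laplace (\<lambda>s. of_real s * A2 s $ i $ l) (z j))
      \<longlongrightarrow> (- ?d + exp (- (\<i> * complex_of_real \<theta>)) * A$i$l + 0 + 0) * 0
        - exp (- (\<i> * complex_of_real \<theta>)) * A$i$l + 0) F"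
    by (intro tendsto_intros laplace_entries_vanish[OF _ kk z] L2 exp_minus_vertical_chain[OF z]
        filterlim_compose[OF tendsto_inverse_0 zinf])
  moreover have "eventually (\<lambda>j. (- ?d + exp (- z j) * A$i$l + laplace (\<lambda>s. A2 s $ i $ l) (z j)
        + laplace (\<lambda>s. of_real s * A3 s $ i $ l) (z j)) * inverse (z j)
        - exp (- z j) * A$i$l + laplace (\<lambda>s. of_real s * A2 s $ i $ l) (z j)
      = DeltaD A A2 A3 (z j) $ i $ l / z j) F"
    using filterlim_at_infinity_imp_eventually_ne[OF zinf, of 0]
    by eventually_elim (simp add: DeltaD_entry[OF L2] field_simps)
  ultimately show ?thesis using tendsto_cong by force
qed

section \<open>Limits along sequences of roots and the proof of the theorem\<close>

lemma exp_minus_i_Arg: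
  assumes "cmod \<mu> = 1"
  shows "exp (- (\<i> * complex_of_real (Arg \<mu>))) = cnj \<mu>"
    and "exp (- (\<i> * complex_of_real (- Arg \<mu>))) = \<mu>"
proof -
  have "\<mu> \<noteq> 0" using assms by auto
  then have "\<mu> = cis (Arg \<mu>)" using Arg_correct[of \<mu>] assms by (simp add: sgn_eq)
  then have e: "exp (\<i> * complex_of_real (Arg \<mu>)) = \<mu>" by (simp add: cis_conv_exp)
  have "\<mu> * cnj \<mu> = 1" using assms by (simp add: complex_norm_square[symmetric])
  then show "exp (- (\<i> * complex_of_real (Arg \<mu>))) = cnj \<mu>"
    by (metis exp_minus e inverse_unique)
  show "exp (- (\<i> * complex_of_real (- Arg \<mu>))) = \<mu>" using e by simp
qed

lemma filterlim_uminus_cofinite: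
  assumes "filterlim (kk :: 'a \<Rightarrow> int) cofinite F"
  shows "filterlim (\<lambda>j. - kk j) cofinite F"
  unfolding filterlim_iff
proof (intro allI impI)
  fix P :: "int \<Rightarrow> bool" assume "eventually P cofinite"
  then have "finite (uminus ` {x. \<not> P x})" by (simp add: eventually_cofinite)
  moreover have "{x. \<not> P (- x)} = uminus ` {x. \<not> P x}" by force
  ultimately have "eventually (\<lambda>x. P (- x)) cofinite" by (simp add: eventually_cofinite)
  then show "eventually (\<lambda>x. P (- kk x)) F" using assms by (rule eventually_compose_filterlim)
qed

lemma matrix_vector_div_limit:
  fixes M :: "'a \<Rightarrow> complex^'n^'m"
  assumes M: "\<And>i l. ((\<lambda>j. M j $ i $ l / Z j) \<longlongrightarrow> B $ i $ l) F" and X: "(X \<longlongrightarrow> x) F"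
  shows "((\<lambda>j. (M j *v X j) $ i / Z j) \<longlongrightarrow> (B *v x) $ i) F"
proof -
  have "((\<lambda>j. \<Sum>l\<in>UNIV. (M j $ i $ l / Z j) * X j $ l) \<longlongrightarrow> (\<Sum>l\<in>UNIV. B $ i $ l * x $ l)) F"
    by (intro tendsto_sum tendsto_mult M tendsto_vec_nth X)
  then show ?thesis by (simp add: matrix_vector_mult_def sum_divide_distrib)
qed

lemma kernel_limit:
  fixes M :: "nat \<Rightarrow> complex^'n^'m"
  assumes "\<And>j. M j *v X j = 0" "\<And>i l. ((\<lambda>j. M j $ i $ l / Z j) \<longlongrightarrow> B $ i $ l) sequentially"
    and "X \<longlonglongrightarrow> x"
  shows "B *v x = 0"
proof -
  have "((\<lambda>j. 0) \<longlongrightarrow> (B *v x) $ i) sequentially" for i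
    using matrix_vector_div_limit[OF assms(2,3), of i] assms(1) by simp
  then show ?thesis by (simp add: vec_eq_iff LIMSEQ_const_iff)
qed

lemma cinner_div_limit:
  fixes M :: "'a \<Rightarrow> complex^'n^'n"
  assumes "\<And>i l. ((\<lambda>j. M j $ i $ l / Z j) \<longlongrightarrow> B $ i $ l) F"
    and "(X \<longlongrightarrow> x) F" "(Y \<longlongrightarrow> y) F"
  shows "((\<lambda>j. cinner (M j *v X j) (Y j) / Z j) \<longlongrightarrow> cinner (B *v x) y) F"
proof -
  have "((\<lambda>j. \<Sum>i\<in>UNIV. (M j *v X j) $ i / Z j * cnj (Y j $ i)) \<longlongrightarrow> cinner (B *v x) y) F"
    unfolding cinner_def
    by (intro tendsto_sum tendsto_mult tendsto_cnj tendsto_vec_nth matrix_vector_div_limit assms)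
  then show ?thesis by (simp add: cinner_def sum_divide_distrib)
qed

lemma eigenvector_of_scaled_kernel:
  fixes A :: "complex^'n^'n"
  assumes "cmod \<mu> = 1" "(mat (cnj \<mu>) ** A - mat 1) *v x = 0"
  shows "A *v x = \<mu> *s x"
proof -
  have "cnj \<mu> *s (A *v x) = x"
    using assms(2) by (simp add: matrix_vector_mult_diff_rdistrib mat_matrix_vector_mult)
  then have "\<mu> *s x = (\<mu> * cnj \<mu>) *s (A *v x)" by (metis vector_smult_assoc)
  also have "\<mu> * cnj \<mu> = 1" using assms(1) by (simp add: complex_norm_square[symmetric])
  finally show ?thesis by simp
qed

lemma root_sequence_limits:
  fixes A :: "complex^'n^'n" and A2 A3 :: "real \<Rightarrow> complex^'n^'n"
  assumes L2: "L2_mat A2" "L2_mat A3" and \<mu>: "cmod \<mu> = 1"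
    and kk: "filterlim kk cofinite sequentially"
    and z: "(\<lambda>j. z j - lam_tilde \<mu> (kk j)) \<longlonglongrightarrow> 0"
    and kerx: "\<And>j. Delta A A2 A3 (z j) *v X j = 0"
    and kery: "\<And>j. DeltaStar A A2 A3 (cnj (z j)) *v Y j = 0"
    and X: "X \<longlonglongrightarrow> x" and Y: "Y \<longlonglongrightarrow> y"
  shows "A *v x = \<mu> *s x" "cadj A *v y = cnj \<mu> *s y"
    and "(\<lambda>j. cinner (DeltaD A A2 A3 (z j) *v X j) (Y j) / z j) \<longlonglongrightarrow> - cinner x y"
proof -
  have z': "(\<lambda>j. z j - \<i> * complex_of_real (Arg \<mu> + 2 * pi * real_of_int (kk j))) \<longlonglongrightarrow> 0"
    using z unfolding lam_tilde_def .
  have "(\<lambda>j. cnj (z j - \<i> * complex_of_real (Arg \<mu> + 2 * pi * real_of_int (kk j)))) \<longlonglongrightarrow> cnj 0"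
    by (intro tendsto_cnj z')
  then have zc: "(\<lambda>j. cnj (z j) - \<i> * complex_of_real (- Arg \<mu> + 2 * pi * real_of_int (- kk j))) \<longlonglongrightarrow> 0"
    by (simp add: algebra_simps)
  note limits = Delta_div_limit[OF L2 kk z', unfolded exp_minus_i_Arg[OF \<mu>]]
    DeltaD_div_limit[OF L2 kk z', unfolded exp_minus_i_Arg[OF \<mu>]]
  note limits_adj = Delta_div_limit[OF L2_mat_cadj[OF L2(1)] L2_mat_cadj[OF L2(2)]
      filterlim_uminus_cofinite[OF kk] zc, unfolded exp_minus_i_Arg[OF \<mu>], of "cadj A"]
  have "(mat (cnj \<mu>) ** A - mat 1) *v x = 0"
    by (rule kernel_limit[where Z=z, OF kerx _ X])
       (use limits(1) in \<open>simp add: mat_entry mat_matrix_mult_entry algebra_simps\<close>)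
  then show "A *v x = \<mu> *s x" by (rule eigenvector_of_scaled_kernel[OF \<mu>])
  have "(mat (cnj (cnj \<mu>)) ** cadj A - mat 1) *v y = 0"
    by (rule kernel_limit[where Z="\<lambda>j. cnj (z j)", OF kery _ Y])
       (use limits_adj in \<open>simp add: DeltaStar_def mat_entry mat_matrix_mult_entry algebra_simps\<close>)
  then show "cadj A *v y = cnj \<mu> *s y"
    using eigenvector_of_scaled_kernel[of "cnj \<mu>" "cadj A" y] \<mu> by simp
  have "(\<lambda>j. cinner (DeltaD A A2 A3 (z j) *v X j) (Y j) / z j) \<longlonglongrightarrow> cinner ((mat (- cnj \<mu>) ** A) *v x) y"
    by (rule cinner_div_limit[OF _ X Y]) (use limits(2) in \<open>simp add: mat_matrix_mult_entry\<close>)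
  also have "cinner ((mat (- cnj \<mu>) ** A) *v x) y = - cinner x y"
    using \<open>A *v x = \<mu> *s x\<close> \<mu>
    by (simp add: mat_matrix_vector_mult cinner_def sum_distrib_left mult.assoc[symmetric]
        complex_norm_square[symmetric] mult.commute[of "cnj \<mu>"] sum_negf)
  finally show "(\<lambda>j. cinner (DeltaD A A2 A3 (z j) *v X j) (Y j) / z j) \<longlonglongrightarrow> - cinner x y" .
qed

lemma pairing_subsequence_limit:
  fixes A :: "complex^'n^'n" and A2 A3 :: "real \<Rightarrow> complex^'n^'n"
  assumes L2: "L2_mat A2" "L2_mat A3"
    and \<mu>: "cmod \<mu> = 1" and simple: "order \<mu> (charpoly A) = 1"
    and kk: "filterlim kk cofinite sequentially"
    and z: "(\<lambda>j. z j - lam_tilde \<mu> (kk j)) \<longlonglongrightarrow> 0"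
    and kerx: "\<And>j. Delta A A2 A3 (z j) *v X j = 0"
    and kery: "\<And>j. DeltaStar A A2 A3 (cnj (z j)) *v Y j = 0"
    and norm: "\<And>j. norm (X j) = 1" "\<And>j. norm (Y j) = 1"
  shows "\<exists>r L. strict_mono r \<and> L > 0 \<and>
    (\<lambda>j. cmod (cinner (DeltaD A A2 A3 (z (r j)) *v X (r j)) (Y (r j)) / z (r j))) \<longlonglongrightarrow> L"
proof -
  have "compact (sphere (0::complex^'n) 1 \<times> sphere (0::complex^'n) 1)"
    by (intro compact_Times compact_sphere)
  moreover have "\<forall>j. (X j, Y j) \<in> sphere 0 1 \<times> sphere 0 1" using norm by simp
  ultimately obtain p r where p: "p \<in> sphere 0 1 \<times> sphere 0 1" and r: "strict_mono r"
    and lim: "((\<lambda>j. (X j, Y j)) \<circ> r) \<longlonglongrightarrow> p"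
    unfolding compact_eq_seq_compact_metric seq_compact_def by meson
  obtain x y where xy: "p = (x, y)" by (cases p)
  have X: "(\<lambda>j. X (r j)) \<longlonglongrightarrow> x" and Y: "(\<lambda>j. Y (r j)) \<longlonglongrightarrow> y"
    using tendsto_fst[OF lim] tendsto_snd[OF lim] by (simp_all add: xy comp_def)
  have kkr: "filterlim (\<lambda>j. kk (r j)) cofinite sequentially"
    using filterlim_compose[OF kk filterlim_subseq[OF r]] by (simp add: comp_def)
  have zr: "(\<lambda>j. z (r j) - lam_tilde \<mu> (kk (r j))) \<longlonglongrightarrow> 0"
    using LIMSEQ_subseq_LIMSEQ[OF z r] by (simp add: comp_def)
  note lim = root_sequence_limits[OF L2 \<mu> kkr zr kerx kery X Y]
  have "x \<noteq> 0" "y \<noteq> 0" using p xy by auto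
  then have "cinner x y \<noteq> 0"
    by (rule simple_eigenvalue_eigenvectors_nonorthogonal[OF simple lim(1) _ lim(2)])
  then show ?thesis
    using r tendsto_norm[OF lim(3)] by (intro exI[of _ r] exI[of _ "cmod (cinner x y)"]) simp
qed

lemma eventually_lower_bound_from_subsequences:
  fixes V :: "'a \<Rightarrow> real" and size :: "'a \<Rightarrow> int" and G :: "'a \<Rightarrow> bool"
  assumes sub: "\<And>f. (\<And>j. G (f j) \<and> int j \<le> \<bar>size (f j)\<bar>) \<Longrightarrow>
      \<exists>r L. strict_mono r \<and> L > 0 \<and> (\<lambda>j. V (f (r j))) \<longlonglongrightarrow> L"
  shows "\<exists>c>0. \<exists>N. \<forall>a. G a \<longrightarrow> N \<le> \<bar>size a\<bar> \<longrightarrow> c \<le> V a"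
proof (rule ccontr)
  assume "\<not> ?thesis"
  then have "\<forall>j. \<exists>a. G a \<and> int j \<le> \<bar>size a\<bar> \<and> V a < inverse (real (Suc j))"
    by (metis inverse_positive_iff_positive not_le of_nat_0_less_iff zero_less_Suc)
  then obtain f where f: "\<And>j. G (f j) \<and> int j \<le> \<bar>size (f j)\<bar> \<and> V (f j) < inverse (real (Suc j))"
    by metis
  obtain r L where rL: "strict_mono r" "L > 0" "(\<lambda>j. V (f (r j))) \<longlonglongrightarrow> L"
    using sub[of f] f by blast
  have "V (f (r j)) \<le> inverse (real (Suc j))" for j
  proof -
    have "inverse (real (Suc (r j))) \<le> inverse (real (Suc j))"
      using seq_suble[OF rL(1), of j] by (simp add: field_simps)
    with f[of "r j"] show ?thesis by linarith
  qed
  then have "L \<le> 0" using LIMSEQ_le[OF rL(3) LIMSEQ_inverse_real_of_nat] by blast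
  with rL(2) show False by simp
qed

lemma eventually_upper_bound_from_subsequences:
  fixes V :: "'a \<Rightarrow> real" and size :: "'a \<Rightarrow> int" and G :: "'a \<Rightarrow> bool"
  assumes sub: "\<And>f. (\<And>j. G (f j) \<and> int j \<le> \<bar>size (f j)\<bar>) \<Longrightarrow>
      \<exists>r L. strict_mono r \<and> (\<lambda>j. V (f (r j))) \<longlonglongrightarrow> L"
  shows "\<exists>C N. \<forall>a. G a \<longrightarrow> N \<le> \<bar>size a\<bar> \<longrightarrow> V a \<le> C"
proof (rule ccontr)
  assume "\<not> ?thesis"
  then have "\<forall>j. \<exists>a. G a \<and> int j \<le> \<bar>size a\<bar> \<and> real j < V a"
    by (metis not_le)
  then obtain f where f: "\<And>j. G (f j) \<and> int j \<le> \<bar>size (f j)\<bar> \<and> real j < V (f j)"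
    by metis
  obtain r L where rL: "strict_mono r" "(\<lambda>j. V (f (r j))) \<longlonglongrightarrow> L"
    using sub[of f] f by blast
  obtain B where B: "\<And>j. \<bar>V (f (r j))\<bar> \<le> B"
    using BseqE[OF convergent_imp_Bseq[OF convergentI[OF rL(2)]]] by (metis real_norm_def)
  define j where "j = nat \<lceil>B\<rceil>"
  have "B \<le> real j" unfolding j_def by linarith
  also have "\<dots> \<le> real (r j)" using seq_suble[OF rL(1), of j] by simp
  also have "\<dots> < V (f (r j))" using f by blast
  finally show False using B[of j] by linarith
qed

lemma uniform_bounds_from_subsequences:
  fixes V :: "'a \<Rightarrow> real" and size :: "'a \<Rightarrow> int" and G :: "'a \<Rightarrow> bool"
  assumes sub: "\<And>f. (\<And>j. G (f j) \<and> int j \<le> \<bar>size (f j)\<bar>) \<Longrightarrow>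
      \<exists>r L. strict_mono r \<and> L > 0 \<and> (\<lambda>j. V (f (r j))) \<longlonglongrightarrow> L"
  shows "\<exists>c C N. 0 < c \<and> c < C \<and> (\<forall>a. G a \<longrightarrow> N \<le> \<bar>size a\<bar> \<longrightarrow> c \<le> V a \<and> V a \<le> C)"
proof -
  obtain c N1 where c: "c > 0" "\<And>a. G a \<Longrightarrow> N1 \<le> \<bar>size a\<bar> \<Longrightarrow> c \<le> V a"
    using eventually_lower_bound_from_subsequences[of G size V, OF sub] by blast
  obtain C N2 where C: "\<And>a. G a \<Longrightarrow> N2 \<le> \<bar>size a\<bar> \<Longrightarrow> V a \<le> C"
    using eventually_upper_bound_from_subsequences[of G size V] sub by (metis (no_types))
  show ?thesis
  proof (intro exI conjI allI impI)
    show "0 < c" "c < max C (c + 1)" using c(1) by auto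
    fix a assume "G a" "max N1 N2 \<le> \<bar>size a\<bar>"
    then show "c \<le> V a" "V a \<le> max C (c + 1)" using c(2) C by fastforce+
  qed
qed

lemma filterlim_cofinite_of_growth:
  assumes "\<And>j. int j \<le> \<bar>kk j\<bar>"
  shows "filterlim (kk :: nat \<Rightarrow> int) cofinite sequentially"
  unfolding filterlim_iff
proof (intro allI impI)
  fix P :: "int \<Rightarrow> bool" assume "eventually P cofinite"
  then have fin: "finite {x. \<not> P x}" by (simp add: eventually_cofinite)
  define B where "B = Max (insert 0 (abs ` {x. \<not> P x}))"
  have B: "\<bar>x\<bar> \<le> B" if "\<not> P x" for x
    unfolding B_def using fin that by (intro Max_ge) auto
  show "eventually (\<lambda>j. P (kk j)) sequentially"
    unfolding eventually_sequentially
  proof (intro exI[of _ "nat B + 1"] allI impI)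
    fix j assume "nat B + 1 \<le> j"
    then have "B < \<bar>kk j\<bar>" using assms[of j] by linarith
    then show "P (kk j)" using B by force
  qed
qed

lemma constant_subsequence:
  fixes M :: "nat \<Rightarrow> 'a"
  assumes S: "finite S" and M: "\<And>j. M j \<in> S"
  obtains r :: "nat \<Rightarrow> nat" and m where "strict_mono r" "\<And>j. M (r j) = m" "m \<in> S"
proof -
  have "finite (range M)" using M by (blast intro: finite_subset[OF _ S])
  then have "\<exists>j0\<in>UNIV. infinite {j \<in> UNIV. M j = M j0}"
    by (intro pigeonhole_infinite) simp_all
  then obtain j0 where "infinite {j. M j = M j0}" by auto
  from infinite_enumerate[OF this] obtain r :: "nat \<Rightarrow> nat"
    where "strict_mono r" "\<And>j. M (r j) = M j0" by blast
  with that[of r "M j0"] M show ?thesis by blast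
qed

(* Pigeonhole over the finitely many eigenvalues reduces an arbitrary escaping sequence to one along
   a single chain. *)
lemma root_subsequence_limit:
  fixes Am1 :: "complex^'n^'n" and A2 A3 :: "real \<Rightarrow> complex^'n^'n"
    and M :: "nat \<Rightarrow> nat" and K :: "nat \<Rightarrow> int" and X Y :: "nat \<Rightarrow> complex^'n"
  assumes L2: "L2_mat A2" "L2_mat A3" and S: "finite S"
    and mu: "\<And>m. m \<in> S \<Longrightarrow> cmod (mu m) = 1 \<and> order (mu m) (charpoly Am1) = 1"
    and lam_conv: "\<And>m. m \<in> S \<Longrightarrow> ((\<lambda>k. lam m k - lam_tilde (mu m) k) \<longlongrightarrow> 0) cofinite"
    and seq: "\<And>j. M j \<in> S \<and> int j \<le> \<bar>K j\<bar> \<and>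
        Delta Am1 A2 A3 (lam (M j) (K j)) *v X j = 0 \<and>
        DeltaStar Am1 A2 A3 (cnj (lam (M j) (K j))) *v Y j = 0 \<and> norm (X j) = 1 \<and> norm (Y j) = 1"
  shows "\<exists>r L. strict_mono r \<and> L > 0 \<and>
    (\<lambda>j. cmod (cinner (DeltaD Am1 A2 A3 (lam (M (r j)) (K (r j))) *v X (r j)) (Y (r j))
       / lam (M (r j)) (K (r j)))) \<longlonglongrightarrow> L"
proof -
  obtain r0 :: "nat \<Rightarrow> nat" and m where r0: "strict_mono r0" "\<And>j. M (r0 j) = m" and m: "m \<in> S"
    using constant_subsequence[OF S, of M] seq by blast
  have kk: "filterlim (\<lambda>j. K (r0 j)) cofinite sequentially"
  proof (rule filterlim_cofinite_of_growth)
    fix j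
    have "int j \<le> int (r0 j)" using seq_suble[OF r0(1)] by simp
    also have "\<dots> \<le> \<bar>K (r0 j)\<bar>" using seq by blast
    finally show "int j \<le> \<bar>K (r0 j)\<bar>" .
  qed
  have z: "(\<lambda>j. lam m (K (r0 j)) - lam_tilde (mu m) (K (r0 j))) \<longlonglongrightarrow> 0"
    using filterlim_compose[OF lam_conv[OF m] kk] by (simp add: comp_def)
  have kerx: "Delta Am1 A2 A3 (lam m (K (r0 j))) *v X (r0 j) = 0"
    and kery: "DeltaStar Am1 A2 A3 (cnj (lam m (K (r0 j)))) *v Y (r0 j) = 0"
    and norm: "norm (X (r0 j)) = 1" "norm (Y (r0 j)) = 1" for j
    using seq[of "r0 j"] r0(2)[of j] by auto
  obtain r L where "strict_mono r" "L > 0"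
    "(\<lambda>j. cmod (cinner (DeltaD Am1 A2 A3 (lam m (K (r0 (r j)))) *v X (r0 (r j))) (Y (r0 (r j)))
       / lam m (K (r0 (r j))))) \<longlonglongrightarrow> L"
    using mu[OF m] pairing_subsequence_limit[OF L2 _ _ kk z kerx kery norm] by blast
  then show ?thesis
    using strict_mono_o[OF r0(1)] r0(2) by (intro exI[of _ "r0 \<circ> r"] exI[of _ L]) (simp add: comp_def)
qed

(* The theorem: apply the compactness principle to the data a = (m, k, x, y), with size |k|. *)
theorem lemma6:
  fixes Am1 :: "complex^'n^'n" and A2 A3 :: "real \<Rightarrow> complex^'n^'n"
    and mu :: "nat \<Rightarrow> complex" and l1 :: nat
    and N1 :: int and r :: "int \<Rightarrow> real" and lam :: "nat \<Rightarrow> int \<Rightarrow> complex"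
  assumes L2: "L2_mat A2" "L2_mat A3"
    and enum: "bij_betw mu {1..l1} (sigma1 Am1)"
    and simple: "\<forall>\<mu>\<in>sigma1 Am1. order \<mu> (charpoly Am1) = 1"
    and r_pos: "\<forall>k. r k > 0"
    and r_sum: "(\<lambda>k. (r k)^2) summable_on UNIV"
    and lam_root: "\<forall>m\<in>{1..l1}. \<forall>k. \<bar>k\<bar> \<ge> N1 \<longrightarrow>
        lam m k \<in> ball (lam_tilde (mu m) k) (r k) \<and>
        det (Delta Am1 A2 A3 (lam m k)) = 0 \<and>
        deriv (\<lambda>z. det (Delta Am1 A2 A3 z)) (lam m k) \<noteq> 0 \<and>
        (\<forall>z\<in>ball (lam_tilde (mu m) k) (r k). det (Delta Am1 A2 A3 z) = 0 \<longrightarrow> z = lam m k)"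
    and lam_conv: "\<forall>m\<in>{1..l1}. ((\<lambda>k. lam m k - lam_tilde (mu m) k) \<longlongrightarrow> 0) cofinite"
  shows "\<exists>C1 C2 N. 0 < C1 \<and> C1 < C2 \<and> N \<ge> N1 \<and>
    (\<forall>m\<in>{1..l1}. \<forall>k. \<bar>k\<bar> \<ge> N \<longrightarrow>
      (\<forall>x y. Delta Am1 A2 A3 (lam m k) *v x = 0 \<longrightarrow>
             DeltaStar Am1 A2 A3 (cnj (lam m k)) *v y = 0 \<longrightarrow>
             norm x = 1 \<longrightarrow> norm y = 1 \<longrightarrow>
         C1 \<le> cmod (cinner (DeltaD Am1 A2 A3 (lam m k) *v x) y / lam m k) \<and>
         cmod (cinner (DeltaD Am1 A2 A3 (lam m k) *v x) y / lam m k) \<le> C2))"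
proof -
  have mu: "cmod (mu m) = 1 \<and> order (mu m) (charpoly Am1) = 1" if "m \<in> {1..l1}" for m
    using bij_betw_apply[OF enum that] simple by (simp add: sigma1_def)
  define G where "G = (\<lambda>(m, k, x, y). m \<in> {1..l1} \<and> Delta Am1 A2 A3 (lam m k) *v x = 0 \<and>
      DeltaStar Am1 A2 A3 (cnj (lam m k)) *v y = 0 \<and> norm x = 1 \<and> norm (y :: complex^'n) = 1)"
  define V where "V = (\<lambda>(m, k, x, y :: complex^'n).
      cmod (cinner (DeltaD Am1 A2 A3 (lam m k) *v x) y / lam m k))"
  have "\<exists>c C N. 0 < c \<and> c < C \<and> (\<forall>a. G a \<longrightarrow> N \<le> \<bar>fst (snd a)\<bar> \<longrightarrow> c \<le> V a \<and> V a \<le> C)"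
  proof (rule uniform_bounds_from_subsequences)
    fix f :: "nat \<Rightarrow> nat \<times> int \<times> (complex^'n) \<times> (complex^'n)"
    assume "\<And>j. G (f j) \<and> int j \<le> \<bar>fst (snd (f j))\<bar>"
    then show "\<exists>r L. strict_mono r \<and> L > 0 \<and> (\<lambda>j. V (f (r j))) \<longlonglongrightarrow> L"
      using root_subsequence_limit[where S="{1..l1}" and mu=mu and lam=lam and M="\<lambda>j. fst (f j)"
          and K="\<lambda>j. fst (snd (f j))" and X="\<lambda>j. fst (snd (snd (f j)))" and Y="\<lambda>j. snd (snd (snd (f j)))",
          OF L2 finite_atLeastAtMost mu lam_conv[rule_format]]
      unfolding G_def V_def by (simp add: case_prod_beta)
  qed
  then obtain c C N where cC: "0 < c" "c < C"
    and bounds: "\<And>a. G a \<Longrightarrow> N \<le> \<bar>fst (snd a)\<bar> \<Longrightarrow> c \<le> V a \<and> V a \<le> C" by blast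
  then show ?thesis
    unfolding G_def V_def by (intro exI[of _ c] exI[of _ C] exI[of _ "max N N1"]) fastforce
qed

end
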